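(* Let $\varphi(z,x,y)$ satisfy conditions (C1), (C3), (C4), (C5) stated in the context. Assume that $\varphi(z,x,y)$ is twice continuously differentiable in $z$ for almost all $(x,y)\in\Omega\times\Omega$ and satisfies \[ \varphi''(z,x,y)\geq c_7z^{-2}\varphi(z,x,y),\qquad z>0, \] with a constant $c_7$ independent of $z,x,y$. Then $\varphi$ is uniformly convex in the following sense: for every $\varepsilon>0$ there exists $\delta\in(0,1)$ such that \[ \varphi\left(\frac{s+t}{2},x,y\right)\leq (1-\delta)\frac{\varphi(s,x,y)+\varphi(t,x,y)}{2} \] for almost all $(x,y)\in\Omega\times\Omega$ and all $s>0$, $t>0$ with $|s-t|\geq\varepsilon\max\{s,t\}$.
   Context: $\Omega\subseteq\mathbb{R}^d$ is a domain and $\varphi(z,x,y)\ge0$ on $\mathbb{R}_+\times\Omega\times\Omega$. Conditions: (C1) for each $u\in L_{1,loc}(\Omega)$ the function $\varphi(|u(x)-u(y)|,x,y)$ is measurable on $\Omega\times\Omega$; (C3) there are constants $1<p_-\le p_+$ and $\beta\ge1$ such that $r(t)=\varphi(t,x,y)/t^{p_-}$ satisfies $r(s)\le\beta r(t)$ and $r(t)=\varphi(t,x,y)/t^{p_+}$ satisfies $\beta r(s)\ge r(t)$ for all $0\le s\le t$, a.a. $(x,y)$; (C4) $c_1^{-1}\le\varphi(1,x,y)\le c_1$, $\varphi(0,x,y)=0$, $\varphi(t,x,y)>0$ for $t>0$, a.a. $(x,y)$; (C5) $\varphi$ is differentiable in $t>0$ and $0<t\varphi'(t,x,y)\le c_2\varphi(t,x,y)$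 with a constant $c_2>1$. Derivatives $\varphi',\varphi''$ are with respect to the first variable. *)

theory Defs
  imports "HOL-Analysis.Analysis"
begin

definition L1_loc :: "'a::euclidean_space set \<Rightarrow> ('a \<Rightarrow> real) set" where
  "L1_loc \<Omega> = {u. u \<in> borel_measurable (lebesgue_on \<Omega>) \<and>
      (\<forall>K. compact K \<and> K \<subseteq> \<Omega> \<longrightarrow> set_integrable lebesgue K u)}"

definition cond_C1 :: "'a::euclidean_space set \<Rightarrow> (real \<Rightarrow> 'a \<Rightarrow> 'a \<Rightarrow> real) \<Rightarrow> bool" where
  "cond_C1 \<Omega> \<phi> \<longleftrightarrow> (\<forall>u \<in> L1_loc \<Omega>.
      (\<lambda>(x,y). \<phi> \<bar>u x - u y\<bar> x y) \<in> borel_measurable (lebesgue_on (\<Omega> \<times> \<Omega>)))"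

definition cond_C3 :: "'a::euclidean_space set \<Rightarrow> (real \<Rightarrow> 'a \<Rightarrow> 'a \<Rightarrow> real)
    \<Rightarrow> real \<Rightarrow> real \<Rightarrow> real \<Rightarrow> bool" where
  "cond_C3 \<Omega> \<phi> pm pp \<beta> \<longleftrightarrow> 1 < pm \<and> pm \<le> pp \<and> 1 \<le> \<beta> \<and>
     (AE (x,y) in lebesgue_on (\<Omega> \<times> \<Omega>). \<forall>s t. 0 < s \<and> s \<le> t \<longrightarrow>
        \<phi> s x y / s powr pm \<le> \<beta> * (\<phi> t x y / t powr pm) \<and>
        \<phi> t x y / t powr pp \<le> \<beta> * (\<phi> s x y / s powr pp))"

definition cond_C4 :: "'a::euclidean_space set \<Rightarrow> (real \<Rightarrow> 'a \<Rightarrow> 'a \<Rightarrow> real) \<Rightarrow> real \<Rightarrow> bool" where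
  "cond_C4 \<Omega> \<phi> c1 \<longleftrightarrow>
     (AE (x,y) in lebesgue_on (\<Omega> \<times> \<Omega>). inverse c1 \<le> \<phi> 1 x y \<and> \<phi> 1 x y \<le> c1 \<and>
        \<phi> 0 x y = 0 \<and> (\<forall>t>0. \<phi> t x y > 0))"

definition cond_C5 :: "'a::euclidean_space set \<Rightarrow> (real \<Rightarrow> 'a \<Rightarrow> 'a \<Rightarrow> real) \<Rightarrow> real \<Rightarrow> bool" where
  "cond_C5 \<Omega> \<phi> c2 \<longleftrightarrow> 1 < c2 \<and>
     (AE (x,y) in lebesgue_on (\<Omega> \<times> \<Omega>). \<forall>t>0.
        (\<lambda>z. \<phi> z x y) differentiable (at t) \<and>
        0 < t * deriv (\<lambda>z. \<phi> z x y) t \<and>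
        t * deriv (\<lambda>z. \<phi> z x y) t \<le> c2 * \<phi> t x y)"

end

theory Submission
  imports Defs
begin

(* Fix (x, y) and write f = phi(., x, y). For s <= t put m = (s + t)/2 and h = (t - s)/2 >= eps t/2,
   and expand f to second order around m. On [s, m] convexity alone gives f s >= f m - f'(m) h.
   On [m, t] the monotonicity of f gives f'' >= c7 t^-2 f(m), hence
   f t >= f m + f'(m) h + c7 f(m) h^2 / (2 t^2). Adding the two bounds,
   (f s + f t)/2 >= (1 + c7 eps^2/16) f m, i.e. the claim with delta = k/(1 + k), k = c7 eps^2/16.
   Only positivity (C4), monotonicity (C5) and the lower bound on phi'' are needed. *)

lemma second_order_taylor_lower_bound:
  fixes f f' f'' :: "real \<Rightarrow> real"
  assumes derivs: "\<And>u. a \<le> u \<Longrightarrow> u \<le> b \<Longrightarrow>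
      (f has_real_derivative f' u) (at u) \<and> (f' has_real_derivative f'' u) (at u)"
    and lower: "\<And>u. a \<le> u \<Longrightarrow> u \<le> b \<Longrightarrow> k \<le> f'' u"
    and "a \<le> c" "c \<le> b" "a \<le> x" "x \<le> b"
  shows "f c + f' c * (x - c) + k / 2 * (x - c)^2 \<le> f x"
proof (cases "x = c")
  case False
  define diff :: "nat \<Rightarrow> real \<Rightarrow> real" where
    "diff m = (if m = 0 then f else if m = 1 then f' else f'')" for m
  have "\<forall>m u. m < 2 \<and> a \<le> u \<and> u \<le> b \<longrightarrow> (diff m has_real_derivative diff (Suc m) u) (at u)"
    using derivs by (auto simp: diff_def less_2_cases_iff)
  from Taylor[where n = 2 and diff = diff and f = f and c = c and x = x, OF _ _ this]
  obtain \<xi> where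
    \<xi>: "min c x < \<xi>" "\<xi> < max c x" and
    expansion: "f x = f c + f' c * (x - c) + f'' \<xi> / 2 * (x - c)^2"
    using assms(3-6) False by (auto simp: diff_def eval_nat_numeral split: if_splits)
  have "k / 2 * (x - c)^2 \<le> f'' \<xi> / 2 * (x - c)^2"
    using lower[of \<xi>] \<xi> assms(3-6) by (intro mult_right_mono) auto
  then show ?thesis
    using expansion by simp
qed simp

lemma midpoint_convexity_gain_ordered:
  fixes f f' f'' :: "real \<Rightarrow> real"
  assumes derivs: "\<And>z. 0 < z \<Longrightarrow>
      (f has_real_derivative f' z) (at z) \<and> (f' has_real_derivative f'' z) (at z)"
    and nonneg: "\<And>z. 0 < z \<Longrightarrow> 0 \<le> f z"
    and increasing: "\<And>z. 0 < z \<Longrightarrow> 0 \<le> f' z"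
    and f''_lower: "\<And>z. 0 < z \<Longrightarrow> c * z powr -2 * f z \<le> f'' z"
    and "0 \<le> c" "0 \<le> \<epsilon>" "0 < s" "s \<le> t" "\<epsilon> * t \<le> t - s"
  shows "(1 + c * \<epsilon>^2 / 16) * f ((s + t) / 2) \<le> (f s + f t) / 2"
proof -
  define m where "m = (s + t) / 2"
  define h where "h = (t - s) / 2"
  have "0 < t" "s \<le> m" "m \<le> t" "t - m = h" "s - m = - h"
    using assms(7,8) by (auto simp: m_def h_def field_simps)
  have f''_nonneg: "0 \<le> f'' u" if "0 < u" for u
    using f''_lower[OF that] nonneg[OF that] \<open>0 \<le> c\<close> by (meson mult_nonneg_nonneg powr_ge_zero order_trans)
  have f_mono: "f m \<le> f u" if "m \<le> u" for u
  proof (rule DERIV_nonneg_imp_nondecreasing[OF that])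
    fix z assume "m \<le> z"
    then have "0 < z" using \<open>0 < s\<close> \<open>s \<le> m\<close> by linarith
    then show "\<exists>y. (f has_real_derivative y) (at z) \<and> 0 \<le> y"
      using derivs increasing by blast
  qed
  have f''_right: "c * f m / t^2 \<le> f'' u" if "m \<le> u" "u \<le> t" for u
  proof -
    have "0 < u" using that \<open>0 < s\<close> \<open>s \<le> m\<close> by linarith
    have "c * f m / t^2 \<le> c * f u / u^2"
      using that \<open>0 < u\<close> \<open>0 \<le> c\<close> f_mono nonneg
      by (intro frac_le mult_left_mono power_mono) auto
    also have "\<dots> = c * u powr -2 * f u"
      using \<open>0 < u\<close> by (simp add: powr_minus powr_realpow divide_inverse)
    finally show ?thesis using f''_lower[OF \<open>0 < u\<close>] by linarith
  qed
  have derivs_from_s: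
    "(f has_real_derivative f' u) (at u) \<and> (f' has_real_derivative f'' u) (at u)" if "s \<le> u" for u
    using derivs[of u] that \<open>0 < s\<close> by simp
  define gain where "gain = c * f m / t^2 * h^2"
  have "f m + f' m * (t - m) + c * f m / t^2 / 2 * (t - m)^2 \<le> f t"
    using \<open>s \<le> m\<close> \<open>m \<le> t\<close>
    by (intro second_order_taylor_lower_bound[where f'' = f'' and a = m and b = t]
        derivs_from_s f''_right) auto
  then have right: "f m + f' m * h + gain / 2 \<le> f t"
    using \<open>t - m = h\<close> by (simp add: gain_def)
  have "f m + f' m * (s - m) + 0 / 2 * (s - m)^2 \<le> f s"
    using \<open>0 < s\<close> \<open>s \<le> m\<close>
    by (intro second_order_taylor_lower_bound[where f'' = f'' and a = s and b = m]
        derivs_from_s f''_nonneg) auto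
  then have left: "f m - f' m * h \<le> f s"
    using \<open>s - m = - h\<close> by simp
  have "\<epsilon>^2 / 4 \<le> h^2 / t^2"
    using power_mono[of "\<epsilon> * t / 2" h 2] assms(6,9) \<open>0 < t\<close>
    by (simp add: h_def field_simps power_mult_distrib)
  then have "c * f m * (\<epsilon>^2 / 4) \<le> c * f m * (h^2 / t^2)"
    using \<open>0 \<le> c\<close> nonneg[of m] \<open>0 < s\<close> \<open>s \<le> m\<close> by (intro mult_left_mono) auto
  then have "(1 + c * \<epsilon>^2 / 16) * f m \<le> f m + gain / 4"
    by (simp add: gain_def algebra_simps)
  then have "(1 + c * \<epsilon>^2 / 16) * f m \<le> (f s + f t) / 2"
    using left right by argo
  then show ?thesis
    by (simp add: m_def)
qed

lemma midpoint_convexity_gain: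
  fixes f f' f'' :: "real \<Rightarrow> real"
  assumes "\<And>z. 0 < z \<Longrightarrow>
      (f has_real_derivative f' z) (at z) \<and> (f' has_real_derivative f'' z) (at z)"
    and "\<And>z. 0 < z \<Longrightarrow> 0 \<le> f z"
    and "\<And>z. 0 < z \<Longrightarrow> 0 \<le> f' z"
    and "\<And>z. 0 < z \<Longrightarrow> c * z powr -2 * f z \<le> f'' z"
    and "0 \<le> c" "0 \<le> \<epsilon>" "0 < s" "0 < t" "\<epsilon> * max s t \<le> \<bar>s - t\<bar>"
  shows "(1 + c * \<epsilon>^2 / 16) * f ((s + t) / 2) \<le> (f s + f t) / 2"
proof (cases "s \<le> t")
  case True
  then show ?thesis
    using midpoint_convexity_gain_ordered[OF assms(1-7)] assms(9) by (simp add: max_def)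
next
  case False
  then have "(1 + c * \<epsilon>^2 / 16) * f ((t + s) / 2) \<le> (f t + f s) / 2"
    using midpoint_convexity_gain_ordered[OF assms(1-6,8)] assms(9) by (simp add: max_def)
  then show ?thesis
    by (simp add: add.commute)
qed

theorem lemma2p1:
  fixes \<Omega> :: "'a::euclidean_space set"
    and \<phi> :: "real \<Rightarrow> 'a \<Rightarrow> 'a \<Rightarrow> real"
    and pm pp \<beta> c1 c2 c7 :: real
  assumes "open \<Omega>" and "connected \<Omega>" and "\<Omega> \<noteq> {}"
    and "cond_C1 \<Omega> \<phi>"
    and "cond_C3 \<Omega> \<phi> pm pp \<beta>"
    and "cond_C4 \<Omega> \<phi> c1"
    and "cond_C5 \<Omega> \<phi> c2"
    and "c7 > 0"
    and "AE (x,y) in lebesgue_on (\<Omega> \<times> \<Omega>).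
           (\<forall>z>0. (\<lambda>w. \<phi> w x y) differentiable (at z)
                 \<and> deriv (\<lambda>w. \<phi> w x y) differentiable (at z)) \<and>
           continuous_on {0<..} (deriv (deriv (\<lambda>w. \<phi> w x y))) \<and>
           (\<forall>z>0. deriv (deriv (\<lambda>w. \<phi> w x y)) z \<ge> c7 * z powr (-2) * \<phi> z x y)"
  shows "\<forall>\<epsilon>>0. \<exists>\<delta>. 0 < \<delta> \<and> \<delta> < 1 \<and>
           (AE (x,y) in lebesgue_on (\<Omega> \<times> \<Omega>). \<forall>s t. 0 < s \<and> 0 < t \<and>
              \<bar>s - t\<bar> \<ge> \<epsilon> * max s t \<longrightarrow>
              \<phi> ((s + t) / 2) x y \<le> (1 - \<delta>) * ((\<phi> s x y + \<phi> t x y) / 2))"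
proof (intro allI impI)
  fix \<epsilon> :: real assume "\<epsilon> > 0"
  define k where "k = c7 * \<epsilon>^2 / 16"
  define \<delta> where "\<delta> = k / (1 + k)"
  have "0 < k" using \<open>\<epsilon> > 0\<close> \<open>c7 > 0\<close> by (simp add: k_def)
  then have "0 < \<delta>" "\<delta> < 1" and one_minus_delta_iff: "a \<le> (1 - \<delta>) * b \<longleftrightarrow> (1 + k) * a \<le> b" for a b
    by (auto simp: \<delta>_def field_simps)
  moreover have "AE (x,y) in lebesgue_on (\<Omega> \<times> \<Omega>). \<forall>s t. 0 < s \<and> 0 < t \<and>
      \<bar>s - t\<bar> \<ge> \<epsilon> * max s t \<longrightarrow>
      \<phi> ((s + t) / 2) x y \<le> (1 - \<delta>) * ((\<phi> s x y + \<phi> t x y) / 2)"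
    using assms(6,9) assms(7)[unfolded cond_C5_def, THEN conjunct2] unfolding cond_C4_def one_minus_delta_iff
  proof eventually_elim
    case (elim p)
    obtain x y where p: "p = (x, y)" by fastforce
    define f where "f = (\<lambda>w. \<phi> w x y)"
    have derivs: "(f has_real_derivative deriv f z) (at z) \<and>
        (deriv f has_real_derivative deriv (deriv f) z) (at z)" if "0 < z" for z
      using elim that by (simp add: p f_def DERIV_deriv_iff_real_differentiable)
    have "0 \<le> f z" "0 \<le> deriv f z" "c7 * z powr -2 * f z \<le> deriv (deriv f) z" if "0 < z" for z
      using elim that by (auto simp: p f_def zero_less_mult_iff less_imp_le)
    from midpoint_convexity_gain[OF derivs this] \<open>c7 > 0\<close> \<open>\<epsilon> > 0\<close>
    show ?case
      by (simp add: p f_def k_def)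
  qed
  ultimately show "\<exists>\<delta>. 0 < \<delta> \<and> \<delta> < 1 \<and>
      (AE (x,y) in lebesgue_on (\<Omega> \<times> \<Omega>). \<forall>s t. 0 < s \<and> 0 < t \<and>
         \<bar>s - t\<bar> \<ge> \<epsilon> * max s t \<longrightarrow>
         \<phi> ((s + t) / 2) x y \<le> (1 - \<delta>) * ((\<phi> s x y + \<phi> t x y) / 2))"
    by blast
qed

end
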